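(* Let $\varphi,\psi$ be metric-compatible functions and $T\in\mathrm{Aut}(X,\mu)$ aperiodic. Then $\varphi(t)=O(\psi(t))$ as $t\to+\infty$ if and only if $[T]_\psi\subseteq[T]_\varphi$. Consequently $[T]_\varphi=[T]_\psi$ if and only if $\varphi(t)=O(\psi(t))$ and $\psi(t)=O(\varphi(t))$ as $t\to+\infty$.
   Context: $(X,\mu)$ standard atomless probability space; $\mathrm{Aut}(X,\mu)$ measure-preserving transformations modulo null sets. For aperiodic $T$, $[T]$ is the set of $U\in\mathrm{Aut}(X,\mu)$ with $U(x)=T^{c_U(x)}(x)$ a.e. for a measurable $c_U:X\to\mathbb Z$. $\varphi:\mathbb R_+\to\mathbb R_+$ is metric-compatible if subadditive, non-decreasing, $\varphi(0)=0$, $\varphi(t)>0$ for $t>0$. $[T]_\varphi=\{U\in[T]:\int_X\varphi(|c_U|)d\mu<\infty\}$. *)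

theory Defs
  imports "HOL-Probability.Probability" "HOL-Library.Landau_Symbols"
begin

definition atomless :: "'a measure \<Rightarrow> bool" where
  "atomless M \<longleftrightarrow> (\<forall>A \<in> sets M. emeasure M A > 0 \<longrightarrow>
      (\<exists>B \<in> sets M. B \<subseteq> A \<and> 0 < emeasure M B \<and> emeasure M B < emeasure M A))"

definition standard_atomless_prob :: "'a::polish_space measure \<Rightarrow> bool" where
  "standard_atomless_prob M \<longleftrightarrow> prob_space M \<and> sets M = sets borel \<and> atomless M"

text \<open>Measure-preserving automorphisms (invertible modulo null sets). Elements of
  Aut(X,mu) are represented by their representatives; all notions below are invariant under
  a.e. equality.\<close>
definition measure_preserving_map :: "'a measure \<Rightarrow> ('a \<Rightarrow> 'a) \<Rightarrow> bool" where
  "measure_preserving_map M U \<longleftrightarrow> U \<in> measurable M M \<and> distr M M U = M"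

definition aut :: "'a measure \<Rightarrow> ('a \<Rightarrow> 'a) \<Rightarrow> bool" where
  "aut M U \<longleftrightarrow> measure_preserving_map M U \<and>
     (\<exists>V. measure_preserving_map M V \<and> (AE x in M. V (U x) = x) \<and> (AE x in M. U (V x) = x))"

definition aperiodic :: "'a measure \<Rightarrow> ('a \<Rightarrow> 'a) \<Rightarrow> bool" where
  "aperiodic M T \<longleftrightarrow> (\<forall>n::nat. n \<ge> 1 \<longrightarrow> (AE x in M. (T ^^ n) x \<noteq> x))"

definition int_iter :: "('a \<Rightarrow> 'a) \<Rightarrow> int \<Rightarrow> 'a \<Rightarrow> 'a \<Rightarrow> bool" where
  "int_iter T k x y \<longleftrightarrow> (if k \<ge> 0 then y = (T ^^ nat k) x else (T ^^ nat (- k)) y = x)"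

definition full_group_phi :: "'a measure \<Rightarrow> ('a \<Rightarrow> 'a) \<Rightarrow> (real \<Rightarrow> real) \<Rightarrow> ('a \<Rightarrow> 'a) set" where
  "full_group_phi M T \<phi> = {U. aut M U \<and>
     (\<exists>c :: 'a \<Rightarrow> int. c \<in> measurable M (count_space UNIV) \<and>
        (AE x in M. int_iter T (c x) x (U x)) \<and>
        (\<integral>\<^sup>+ x. ennreal (\<phi> (real_of_int \<bar>c x\<bar>)) \<partial>M) < \<infinity>)}"

definition metric_compatible :: "(real \<Rightarrow> real) \<Rightarrow> bool" where
  "metric_compatible \<phi> \<longleftrightarrow>
     (\<forall>s t. 0 \<le> s \<longrightarrow> 0 \<le> t \<longrightarrow> \<phi> (s + t) \<le> \<phi> s + \<phi> t) \<and>
     mono_on {0..} \<phi> \<and> \<phi> 0 = 0 \<and> (\<forall>t > 0. \<phi> t > 0)"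

end

theory Submission
  imports Defs
begin

text \<open>
  If \<open>\<phi> \<le> K \<psi>\<close> on the integers, integrability of \<open>\<psi>(|c\<^sub>U|)\<close> gives integrability of
  \<open>\<phi>(|c\<^sub>U|)\<close>. Conversely, if \<open>\<phi> \<notin> O(\<psi>)\<close>, pick jumps \<open>n\<^sub>k\<close> with \<open>\<phi>(n\<^sub>k) \<ge> 2\<^sup>k \<psi>(n\<^sub>k)\<close>
  and weights \<open>a\<^sub>k\<close> with \<open>\<Sum> \<psi>(n\<^sub>k) a\<^sub>k < \<infinity> = \<Sum> \<phi>(n\<^sub>k) a\<^sub>k\<close>. Using aperiodicity and the
  absence of atoms, choose disjoint sets \<open>A\<^sub>k\<close> of measure \<open>a\<^sub>k\<close> whose images \<open>T\<^bsup>n\<^sub>k\<^esup> A\<^sub>k\<close> are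
  disjoint from them and from each other (a maximality argument shows that any set \<open>C\<close>
  contains a subset of measure \<open>\<ge> \<mu>(C)/3\<close> disjoint from its \<open>T\<^bsup>n\<^esup>\<close>-image). The involution
  exchanging each \<open>A\<^sub>k\<close> with \<open>T\<^bsup>n\<^sub>k\<^esup> A\<^sub>k\<close> lies in \<open>[T]\<^sub>\<psi>\<close> but not in \<open>[T]\<^sub>\<phi>\<close>.
\<close>

section \<open>Atomless finite measures\<close>

lemma exists_ge_half_cSup:
  fixes S :: "real set"
  assumes "0 \<in> S" "bdd_above S"
  shows "\<exists>x\<in>S. Sup S / 2 \<le> x"
proof (cases "Sup S = 0")
  case True
  then show ?thesis using assms(1) by auto
next
  case False
  have "0 \<le> Sup S" using cSup_upper[OF assms] .
  with False have "Sup S / 2 < Sup S" by simp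
  then obtain x where "x \<in> S" "Sup S / 2 < x"
    by (rule less_cSupE) (use assms(1) in auto)
  then show ?thesis by (auto intro: less_imp_le)
qed

context finite_measure
begin

text \<open>Greedy exhaustion: each step adds at least half of what could still be added, so the gains
  are summable and hence tend to zero.\<close>
lemma exists_maximal_mod_null:
  assumes sets: "\<And>A. F A \<Longrightarrow> A \<in> sets M" and empty: "F {}"
    and hereditary: "\<And>A B. F A \<Longrightarrow> B \<in> sets M \<Longrightarrow> B \<subseteq> A \<Longrightarrow> F B"
    and incseq: "\<And>f. incseq f \<Longrightarrow> (\<And>i. F (f i)) \<Longrightarrow> F (\<Union>i. f i)"
  obtains A where "F A"
    and "\<And>D. D \<in> sets M \<Longrightarrow> D \<inter> A = {} \<Longrightarrow> F (A \<union> D) \<Longrightarrow> measure M D = 0"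
proof -
  define ext where "ext B = {D \<in> sets M. D \<inter> B = {} \<and> F (B \<union> D)}" for B
  define gain where "gain B = Sup (measure M ` ext B)" for B
  have bdd: "bdd_above (measure M ` ext B)" for B
    by (rule bdd_aboveI[of _ "measure M (space M)"]) (auto simp: ext_def intro: bounded_measure)
  have "\<exists>D. F B \<longrightarrow> D \<in> ext B \<and> gain B / 2 \<le> measure M D" for B
  proof (cases "F B")
    case True
    then have "measure M {} \<in> measure M ` ext B" unfolding ext_def by force
    then show ?thesis using exists_ge_half_cSup[OF _ bdd, of B] unfolding gain_def by auto
  qed simp
  then obtain pick where pick: "\<And>B. F B \<Longrightarrow> pick B \<in> ext B \<and> gain B / 2 \<le> measure M (pick B)"
    by (metis choice)
  define A where "A i = ((\<lambda>B. B \<union> pick B) ^^ i) {}" for i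
  have A_Suc: "A (Suc i) = A i \<union> pick (A i)" for i by (simp add: A_def)
  have FA: "F (A i)" for i
  proof (induction i)
    case (Suc i)
    then show ?case using pick[OF Suc] unfolding A_Suc ext_def by blast
  qed (simp add: A_def empty)
  have "incseq A" by (rule incseq_SucI) (simp add: A_Suc)
  show thesis
  proof
    show "F (\<Union>i. A i)" by (rule incseq[OF \<open>incseq A\<close> FA])
    fix D assume D: "D \<in> sets M" "D \<inter> (\<Union>i. A i) = {}" "F ((\<Union>i. A i) \<union> D)"
    have "D \<in> ext (A i)" for i
    proof -
      have "A i \<union> D \<in> sets M" using sets[OF FA] D(1) by blast
      then have "F (A i \<union> D)" by (rule hereditary[OF D(3)]) blast
      then show ?thesis using D(1,2) unfolding ext_def by blast
    qed
    then have gain: "measure M D \<le> gain (A i)" for i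
      unfolding gain_def by (intro cSup_upper bdd) auto
    have mA: "measure M (A (Suc i)) = measure M (A i) + measure M (pick (A i))" for i
      using pick[OF FA] sets[OF FA] unfolding A_Suc ext_def by (intro finite_measure_Union) auto
    have grow: "real i * measure M D / 2 \<le> measure M (A i)" for i
    proof (induction i)
      case (Suc i)
      then show ?case using pick[OF FA, of i] gain[of i] mA[of i] by (simp add: field_simps)
    qed (simp add: A_def)
    show "measure M D = 0"
    proof (rule ccontr)
      assume "measure M D \<noteq> 0"
      then have "0 < measure M D" using measure_nonneg[of M D] by linarith
      then obtain N :: nat where "2 * measure M (space M) / measure M D < real N"
        using reals_Archimedean2 by blast
      then have "2 * measure M (space M) < real N * measure M D"
        using \<open>0 < measure M D\<close> by (simp add: field_simps)
      moreover have "measure M (A N) \<le> measure M (space M)" by (rule bounded_measure)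
      ultimately show False using grow[of N] by linarith
    qed
  qed
qed

lemma atomless_split:
  assumes "atomless M" "A \<in> sets M" "0 < measure M A"
  obtains B where "B \<in> sets M" "B \<subseteq> A" "0 < measure M B" "measure M B < measure M A"
  using assms unfolding atomless_def by (auto simp: emeasure_eq_measure ennreal_less_iff)

lemma atomless_small_subset:
  assumes "atomless M" "A \<in> sets M" "0 < measure M A" "0 < e"
  obtains B where "B \<in> sets M" "B \<subseteq> A" "0 < measure M B" "measure M B \<le> e"
proof -
  have "\<exists>B\<in>sets M. B \<subseteq> A \<and> 0 < measure M B \<and> measure M B \<le> measure M A / 2^k" for k
  proof (induction k)
    case (Suc k)
    then obtain B where B: "B \<in> sets M" "B \<subseteq> A" "0 < measure M B" "measure M B \<le> measure M A / 2^k"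
      by blast
    obtain C where C: "C \<in> sets M" "C \<subseteq> B" "0 < measure M C" "measure M C < measure M B"
      using atomless_split[OF assms(1) B(1,3)] by blast
    have "measure M (B - C) = measure M B - measure M C"
      using C B by (simp add: finite_measure_Diff)
    then show ?case
    proof (cases "measure M C \<le> measure M B / 2")
      case True
      then show ?thesis using B C by (intro bexI[of _ C]) auto
    next
      case False
      then show ?thesis using B C \<open>measure M (B - C) = _\<close> by (intro bexI[of _ "B - C"]) auto
    qed
  qed (use assms in auto)
  moreover obtain k :: nat where "measure M A / e < 2^k"
    using real_arch_pow[of 2 "measure M A / e"] by auto
  then have "measure M A / 2^k < e" using assms(4) by (simp add: field_simps)
  ultimately obtain B where "B \<in> sets M" "B \<subseteq> A" "0 < measure M B" "measure M B \<le> measure M A / 2^k"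
    by blast
  with \<open>measure M A / 2^k < e\<close> show thesis by (intro that) auto
qed

lemma atomless_exists_subset_measure:
  assumes atomless: "atomless M" and E: "E \<in> sets M" and a: "0 \<le> a" "a \<le> measure M E"
  obtains A where "A \<in> sets M" "A \<subseteq> E" "measure M A = a"
proof -
  define F where "F A \<longleftrightarrow> A \<in> sets M \<and> A \<subseteq> E \<and> measure M A \<le> a" for A
  obtain A where FA: "F A"
    and maximal: "\<And>D. D \<in> sets M \<Longrightarrow> D \<inter> A = {} \<Longrightarrow> F (A \<union> D) \<Longrightarrow> measure M D = 0"
  proof (rule exists_maximal_mod_null[of F])
    show "F B" if "F A" "B \<in> sets M" "B \<subseteq> A" for A B
      using that finite_measure_mono[of B A] unfolding F_def by auto
    show "F (\<Union>i. f i)" if "incseq f" "\<And>i. F (f i)" for f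
    proof -
      have "range f \<subseteq> sets M" using that(2) unfolding F_def by blast
      then have "(\<lambda>i. measure M (f i)) \<longlonglongrightarrow> measure M (\<Union>i. f i)"
        using finite_Lim_measure_incseq that(1) by blast
      then have "measure M (\<Union>i. f i) \<le> a"
        by (rule LIMSEQ_le_const2) (use that(2) F_def in blast)
      then show ?thesis using that(2) \<open>range f \<subseteq> sets M\<close> unfolding F_def by blast
    qed
  qed (use a E in \<open>auto simp: F_def\<close>)
  then have A: "A \<in> sets M" "A \<subseteq> E" "measure M A \<le> a" unfolding F_def by auto
  have "measure M A = a"
  proof (rule ccontr)
    assume "measure M A \<noteq> a"
    with A have gap: "0 < a - measure M A" by simp
    moreover have "0 < measure M (E - A)"
      using A a gap finite_measure_Diff[OF E A(1,2)] by simp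
    moreover have "E - A \<in> sets M" using E A(1) by blast
    ultimately obtain D where D: "D \<in> sets M" "D \<subseteq> E - A" "0 < measure M D" "measure M D \<le> a - measure M A"
      using atomless_small_subset[OF atomless] by metis
    have "measure M (A \<union> D) = measure M A + measure M D"
      using D A by (intro finite_measure_Union) auto
    then have "F (A \<union> D)" using A D unfolding F_def by auto
    then have "measure M D = 0" using maximal D(1,2) by blast
    with D(3) show False by simp
  qed
  with A show thesis by (intro that)
qed


lemma exists_maximal_displaced_subset:
  assumes C: "C \<in> sets M"
  obtains A where "A \<in> sets M" "A \<subseteq> C" "A \<inter> f -` A = {}"
    "\<And>D. D \<in> sets M \<Longrightarrow> D \<subseteq> C \<Longrightarrow> D \<inter> A = {} \<Longrightarrow>
      (A \<union> D) \<inter> f -` (A \<union> D) = {} \<Longrightarrow> measure M D = 0"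
proof -
  define F where "F A \<longleftrightarrow> A \<in> sets M \<and> A \<subseteq> C \<and> A \<inter> f -` A = {}" for A
  obtain A where FA: "F A"
    and maximal: "\<And>D. D \<in> sets M \<Longrightarrow> D \<inter> A = {} \<Longrightarrow> F (A \<union> D) \<Longrightarrow> measure M D = 0"
  proof (rule exists_maximal_mod_null[of F])
    show "F (\<Union>i. g i)" if inc: "incseq g" and Fg: "\<And>i. F (g i)" for g
    proof -
      have "g i \<inter> f -` g j = {}" for i j
      proof -
        have "g i \<subseteq> g (max i j)" "g j \<subseteq> g (max i j)"
          using inc by (simp_all add: incseqD)
        then show ?thesis using Fg[of "max i j"] unfolding F_def by blast
      qed
      then show ?thesis using Fg unfolding F_def by blast
    qed
    show "F B" if "F A" "B \<in> sets M" "B \<subseteq> A" for A B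
      using that unfolding F_def by blast
    show "F {}" unfolding F_def by blast
    show "A \<in> sets M" if "F A" for A using that unfolding F_def by blast
  qed (rule that)
  show thesis
  proof (rule that)
    show "A \<in> sets M" "A \<subseteq> C" "A \<inter> f -` A = {}" using FA unfolding F_def by auto
    fix D assume D: "D \<in> sets M" "D \<subseteq> C" "D \<inter> A = {}" "(A \<union> D) \<inter> f -` (A \<union> D) = {}"
    then have "F (A \<union> D)" using FA unfolding F_def by blast
    then show "measure M D = 0" using maximal D(1,3) by blast
  qed
qed

end

lemma exists_displaced_subset:
  fixes M :: "'a::{second_countable_topology, t1_space} measure"
  assumes sets_M: "sets M = sets borel" and f: "f \<in> measurable M M"
    and L: "L \<in> sets M" "L \<notin> null_sets M" and moved: "\<And>x. x \<in> L \<Longrightarrow> f x \<noteq> x"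
  obtains D where "D \<in> sets M" "D \<subseteq> L" "D \<notin> null_sets M" "D \<inter> f -` D = {}"
proof -
  note displaced = that
  obtain B :: "'a set set" where B: "countable B" "topological_basis B"
    using ex_countable_basis by blast
  have space: "space M = UNIV" using sets_eq_imp_space_eq[OF sets_M] by simp
  define P where "P b = L \<inter> b - f -` b" for b
  have P_sets: "P b \<in> sets M" if "b \<in> B" for b
  proof -
    have "b \<in> sets M" using topological_basis_open[OF B(2) that] sets_M by simp
    then show ?thesis unfolding P_def using L measurable_sets[OF f, of b] by (auto simp: space)
  qed
  show thesis
  proof (rule ccontr)
    assume "\<not> thesis"
    then have "P b \<in> null_sets M" if "b \<in> B" for b
      using displaced[of "P b"] P_sets[OF that] by (auto simp: P_def)
    moreover have "L \<subseteq> (\<Union>b\<in>B. P b)"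
    proof
      fix x assume "x \<in> L"
      then obtain U where "open U" "x \<in> U" "f x \<notin> U"
        using separation_t1[of x "f x"] moved by metis
      then obtain b where "b \<in> B" "x \<in> b" "b \<subseteq> U" using topological_basisE[OF B(2)] by metis
      with \<open>x \<in> L\<close> \<open>f x \<notin> U\<close> show "x \<in> (\<Union>b\<in>B. P b)" unfolding P_def by blast
    qed
    ultimately show False using null_sets_UN'[OF B(1)] null_sets_subset L(1,2) by (metis null_setsD2)
  qed
qed

section \<open>Metric-compatible functions\<close>

lemma metric_compatible_mono: "metric_compatible f \<Longrightarrow> 0 \<le> s \<Longrightarrow> s \<le> t \<Longrightarrow> f s \<le> f t"
  unfolding metric_compatible_def by (auto intro: mono_onD)

lemma metric_compatible_zero: "metric_compatible f \<Longrightarrow> f 0 = 0"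
  unfolding metric_compatible_def by blast

lemma metric_compatible_pos: "metric_compatible f \<Longrightarrow> 0 < t \<Longrightarrow> 0 < f t"
  unfolding metric_compatible_def by blast

lemma metric_compatible_nonneg: "metric_compatible f \<Longrightarrow> 0 \<le> t \<Longrightarrow> 0 \<le> f t"
  using metric_compatible_mono[of f 0 t] metric_compatible_zero[of f] by simp

lemma metric_compatible_subadditive:
  "metric_compatible f \<Longrightarrow> 0 \<le> s \<Longrightarrow> 0 \<le> t \<Longrightarrow> f (s + t) \<le> f s + f t"
  unfolding metric_compatible_def by blast

text \<open>Below the threshold of the big-O bound, monotonicity of \<open>\<phi>\<close> and \<open>\<psi> 1 > 0\<close> do the job.\<close>
lemma metric_compatible_bigo_nat:
  assumes \<phi>: "metric_compatible \<phi>" and \<psi>: "metric_compatible \<psi>" and "\<phi> \<in> O[at_top](\<psi>)"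
  obtains K where "0 \<le> K" "\<And>m::nat. \<phi> (real m) \<le> K * \<psi> (real m)"
proof -
  obtain c where "0 < c" "eventually (\<lambda>x. norm (\<phi> x) \<le> c * norm (\<psi> x)) at_top"
    using assms(3) by (elim landau_o.bigE)
  then obtain x\<^sub>0 where x\<^sub>0: "\<And>x. x\<^sub>0 \<le> x \<Longrightarrow> norm (\<phi> x) \<le> c * norm (\<psi> x)"
    by (auto simp: eventually_at_top_linorder)
  define N where "N = nat \<lceil>x\<^sub>0\<rceil>"
  have N: "\<phi> x \<le> c * \<psi> x" if "real N \<le> x" for x
  proof -
    have "x\<^sub>0 \<le> x" "0 \<le> x" using that unfolding N_def by linarith+
    then show ?thesis
      using x\<^sub>0[of x] metric_compatible_nonneg[OF \<phi>, of x] metric_compatible_nonneg[OF \<psi>, of x] by simp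
  qed
  define K where "K = c + \<phi> (real N) / \<psi> 1"
  have \<psi>1: "0 < \<psi> 1" using metric_compatible_pos[OF \<psi>] by simp
  have small: "0 \<le> \<phi> (real N) / \<psi> 1" using metric_compatible_nonneg[OF \<phi>] \<psi>1 by simp
  have "\<phi> (real m) \<le> K * \<psi> (real m)" for m
  proof -
    have \<psi>m: "0 \<le> \<psi> (real m)" using metric_compatible_nonneg[OF \<psi>] by simp
    consider "real N \<le> real m" | "m = 0" | "1 \<le> m" "m < N" by linarith
    then show ?thesis
    proof cases
      case 1
      then show ?thesis using N[of "real m"] mult_nonneg_nonneg[OF small \<psi>m]
        unfolding K_def by (simp add: algebra_simps)
    next
      case 2
      then show ?thesis using metric_compatible_zero[OF \<phi>] metric_compatible_zero[OF \<psi>] by simp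
    next
      case 3
      have "\<phi> (real m) \<le> \<phi> (real N)" using 3 by (intro metric_compatible_mono[OF \<phi>]) auto
      also have "\<dots> = \<phi> (real N) / \<psi> 1 * \<psi> 1" using \<psi>1 by simp
      also have "\<dots> \<le> \<phi> (real N) / \<psi> 1 * \<psi> (real m)"
        using 3 small by (intro mult_left_mono metric_compatible_mono[OF \<psi>]) auto
      also have "\<dots> \<le> K * \<psi> (real m)" unfolding K_def using \<open>0 < c\<close> \<psi>m by (simp add: algebra_simps)
      finally show ?thesis .
    qed
  qed
  moreover have "0 \<le> K" unfolding K_def using \<open>0 < c\<close> small by simp
  ultimately show thesis using that by blast
qed

text \<open>Subadditivity gives \<open>\<psi> \<lceil>x\<rceil> \<le> \<psi> x + \<psi> 1 \<le> 2 \<psi> x\<close> for \<open>x \<ge> 1\<close>.\<close>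
lemma metric_compatible_not_bigo_nat:
  assumes \<phi>: "metric_compatible \<phi>" and \<psi>: "metric_compatible \<psi>" and "\<phi> \<notin> O[at_top](\<psi>)"
  obtains m :: nat where "1 \<le> m" "C * \<psi> (real m) \<le> \<phi> (real m)"
proof -
  define c where "c = 2 * max C 1"
  have "\<not> eventually (\<lambda>x. norm (\<phi> x) \<le> c * norm (\<psi> x)) at_top"
    using assms(3) bigoI by blast
  then obtain x where x: "1 \<le> x" "\<not> norm (\<phi> x) \<le> c * norm (\<psi> x)"
    by (auto simp: eventually_at_top_linorder)
  then have less: "c * \<psi> x < \<phi> x"
    using metric_compatible_nonneg[OF \<phi>] metric_compatible_nonneg[OF \<psi>] by simp
  define m where "m = nat \<lceil>x\<rceil>"
  have m: "x \<le> real m" "real m \<le> x + 1" "1 \<le> m"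
    using x(1) of_int_ceiling_le_add_one[of x] unfolding m_def by linarith+
  have "\<psi> (real m) \<le> \<psi> (x + 1)" using m x by (intro metric_compatible_mono[OF \<psi>]) auto
  also have "\<dots> \<le> \<psi> x + \<psi> 1" using x by (intro metric_compatible_subadditive[OF \<psi>]) auto
  also have "\<dots> \<le> 2 * \<psi> x" using x metric_compatible_mono[OF \<psi>, of 1 x] by simp
  finally have "\<psi> (real m) \<le> 2 * \<psi> x" .
  moreover have "0 \<le> \<psi> (real m)" using metric_compatible_nonneg[OF \<psi>] by simp
  ultimately have "C * \<psi> (real m) \<le> max C 1 * (2 * \<psi> x)"
    by (meson max.cobounded1 mult_right_mono order_trans mult_left_mono le_max_iff_disj zero_le_one)
  also have "\<dots> < \<phi> x" using less unfolding c_def by simp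
  also have "\<dots> \<le> \<phi> (real m)" using m x by (intro metric_compatible_mono[OF \<phi>]) auto
  finally show thesis using m(3) that by simp
qed

lemma metric_compatible_not_bigo_seq:
  assumes "metric_compatible \<phi>" "metric_compatible \<psi>" "\<phi> \<notin> O[at_top](\<psi>)"
  obtains n :: "nat \<Rightarrow> nat" where "\<And>k. 1 \<le> n k" "\<And>k. C k * \<psi> (real (n k)) \<le> \<phi> (real (n k))"
proof -
  have "\<forall>k. \<exists>m::nat. 1 \<le> m \<and> C k * \<psi> (real m) \<le> \<phi> (real m)"
  proof
    fix k
    obtain m :: nat where "1 \<le> m" "C k * \<psi> (real m) \<le> \<phi> (real m)"
      by (rule metric_compatible_not_bigo_nat[OF assms])
    then show "\<exists>m::nat. 1 \<le> m \<and> C k * \<psi> (real m) \<le> \<phi> (real m)" by blast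
  qed
  from choice[OF this] show thesis using that by blast
qed

lemma full_group_phi_mono:
  assumes \<phi>: "metric_compatible \<phi>" and \<psi>: "metric_compatible \<psi>" and "\<phi> \<in> O[at_top](\<psi>)"
  shows "full_group_phi M T \<psi> \<subseteq> full_group_phi M T \<phi>"
proof
  obtain K where K: "0 \<le> K" "\<And>m::nat. \<phi> (real m) \<le> K * \<psi> (real m)"
    using metric_compatible_bigo_nat[OF assms] by blast
  fix U assume "U \<in> full_group_phi M T \<psi>"
  then obtain c :: "'a \<Rightarrow> int" where U: "aut M U" "c \<in> measurable M (count_space UNIV)"
    "AE x in M. int_iter T (c x) x (U x)" "(\<integral>\<^sup>+ x. ennreal (\<psi> (real_of_int \<bar>c x\<bar>)) \<partial>M) < \<infinity>"
    unfolding full_group_phi_def by blast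
  have "\<phi> (real_of_int \<bar>c x\<bar>) \<le> K * \<psi> (real_of_int \<bar>c x\<bar>)" for x
    using K(2)[of "nat \<bar>c x\<bar>"] by simp
  then have bound: "ennreal (\<phi> (real_of_int \<bar>c x\<bar>)) \<le> ennreal K * ennreal (\<psi> (real_of_int \<bar>c x\<bar>))" for x
    using K(1) metric_compatible_nonneg[OF \<psi>] by (simp add: ennreal_mult[symmetric] ennreal_leI)
  have "(\<lambda>x. ennreal (\<psi> (real_of_int \<bar>c x\<bar>))) \<in> borel_measurable M"
    using measurable_compose[OF U(2), of "\<lambda>i. ennreal (\<psi> (real_of_int \<bar>i\<bar>))"] by simp
  then have "(\<integral>\<^sup>+ x. ennreal (\<phi> (real_of_int \<bar>c x\<bar>)) \<partial>M)
      \<le> ennreal K * (\<integral>\<^sup>+ x. ennreal (\<psi> (real_of_int \<bar>c x\<bar>)) \<partial>M)"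
    using bound by (auto intro: nn_integral_mono simp flip: nn_integral_cmult)
  also have "\<dots> < \<infinity>" using U(4) by (simp add: ennreal_mult_less_top)
  finally show "U \<in> full_group_phi M T \<phi>" unfolding full_group_phi_def using U by blast
qed

section \<open>Aperiodic automorphisms\<close>

lemma measure_preserving_map_funpow:
  assumes "measure_preserving_map M f"
  shows "measure_preserving_map M (f ^^ n)"
proof (induction n)
  case 0
  then show ?case by (simp add: measure_preserving_map_def id_def distr_id)
next
  case (Suc n)
  have f: "f \<in> measurable M M" "distr M M f = M" using assms measure_preserving_map_def by auto
  have "distr M M (f ^^ Suc n) = distr (distr M M f) M (f ^^ n)"
    using Suc f(1) unfolding measure_preserving_map_def funpow_Suc_right
    by (intro distr_distr[symmetric]) auto
  then show ?case using Suc f unfolding measure_preserving_map_def funpow_Suc_right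
    by (auto intro: measurable_comp)
qed

lemma measure_preserving_map_measure_vimage:
  assumes "measure_preserving_map M f" "B \<in> sets M"
  shows "measure M (f -` B \<inter> space M) = measure M B"
  using assms emeasure_distr[of f M M B] unfolding measure_preserving_map_def measure_def by simp

lemma AE_measure_preserving_map:
  assumes "measure_preserving_map M f" "AE x in M. P x"
  shows "AE x in M. P (f x)"
proof -
  have f: "f \<in> measurable M M" "distr M M f = M" using assms(1) measure_preserving_map_def by auto
  have "AE x in distr M M f. P x" unfolding f(2) by (rule assms(2))
  then show ?thesis by (rule AE_distrD[OF f(1)])
qed

locale aperiodic_automorphism = prob_space M for M :: "'a::polish_space measure" +
  fixes T V :: "'a \<Rightarrow> 'a"
  assumes sets_M: "sets M = sets borel"
    and atomless: "atomless M"
    and T: "measure_preserving_map M T" and V: "measure_preserving_map M V"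
    and V_T: "AE x in M. V (T x) = x" and T_V: "AE x in M. T (V x) = x"
    and aperiodic: "aperiodic M T"
begin

lemma space_M: "space M = UNIV"
  using sets_eq_imp_space_eq[OF sets_M] by simp

lemma measurable_funpow_T: "T ^^ n \<in> measurable M M"
  and measurable_funpow_V: "V ^^ n \<in> measurable M M"
  using measure_preserving_map_funpow[OF T] measure_preserving_map_funpow[OF V]
  unfolding measure_preserving_map_def by auto

lemma vimage_funpow_T_sets: "B \<in> sets M \<Longrightarrow> (T ^^ n) -` B \<in> sets M"
  and vimage_funpow_V_sets: "B \<in> sets M \<Longrightarrow> (V ^^ n) -` B \<in> sets M"
  using measurable_sets[OF measurable_funpow_T] measurable_sets[OF measurable_funpow_V]
  by (simp_all add: space_M)

lemma measure_vimage_funpow_T: "B \<in> sets M \<Longrightarrow> measure M ((T ^^ n) -` B) = measure M B"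
  and measure_vimage_funpow_V: "B \<in> sets M \<Longrightarrow> measure M ((V ^^ n) -` B) = measure M B"
  using measure_preserving_map_measure_vimage[OF measure_preserving_map_funpow[OF T]]
    measure_preserving_map_measure_vimage[OF measure_preserving_map_funpow[OF V]]
  by (simp_all add: space_M)

definition regular :: "'a \<Rightarrow> bool" where
  "regular x \<longleftrightarrow> V (T x) = x \<and> T (V x) = x \<and> (\<forall>n\<ge>1. (T ^^ n) x \<noteq> x)"

text \<open>A conull set, invariant under \<open>T\<close> and \<open>V\<close>, on which \<open>V\<close> inverts \<open>T\<close> and \<open>T\<close> has no
  periodic points: it lets all later arguments work pointwise rather than almost everywhere.\<close>
definition Reg :: "'a set" where
  "Reg = {x. \<forall>m. regular ((T ^^ m) x) \<and> regular ((V ^^ m) x)}"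

lemma sets_regular: "{x. regular x} \<in> sets M"
proof -
  have "{x. regular x} = {x. V (T x) = x} \<inter> {x. T (V x) = x} \<inter> (\<Inter>n\<in>{1..}. - {x. (T ^^ n) x = x})"
    unfolding regular_def by auto
  moreover have "{x. f x = x} \<in> sets M" if "f \<in> measurable M M" for f
  proof -
    have "f \<in> borel_measurable M" "(\<lambda>x. x) \<in> borel_measurable M"
      using that measurable_ident_sets[OF sets_M] by (simp_all add: measurable_cong_sets[OF refl sets_M])
    from measurable_equality_set[OF this] show ?thesis by (simp add: space_M)
  qed
  moreover have "T \<in> measurable M M" "V \<in> measurable M M"
    using T V unfolding measure_preserving_map_def by auto
  then have "(\<lambda>x. V (T x)) \<in> measurable M M" "(\<lambda>x. T (V x)) \<in> measurable M M"
    using measurable_comp by (auto simp: o_def)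
  ultimately show ?thesis using measurable_funpow_T by (auto simp: space_M Compl_eq_Diff_UNIV)
qed

lemma sets_Reg: "Reg \<in> sets M"
proof -
  have "Reg = (\<Inter>m. (T ^^ m) -` {x. regular x} \<inter> (V ^^ m) -` {x. regular x})"
    unfolding Reg_def by auto
  moreover have "(T ^^ m) -` {x. regular x} \<inter> (V ^^ m) -` {x. regular x} \<in> sets M" for m
    using vimage_funpow_T_sets[OF sets_regular] vimage_funpow_V_sets[OF sets_regular] by blast
  ultimately show ?thesis by (simp only:) (rule sets.countable_INT', auto)
qed

lemma AE_Reg: "AE x in M. x \<in> Reg"
proof -
  have "AE x in M. \<forall>n. n \<ge> 1 \<longrightarrow> (T ^^ n) x \<noteq> x"
    using aperiodic unfolding aperiodic_def by (simp add: AE_all_countable)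
  then have "AE x in M. regular x"
    using V_T T_V unfolding regular_def by eventually_elim auto
  then have "AE x in M. regular ((T ^^ m) x) \<and> regular ((V ^^ m) x)" for m
    using AE_measure_preserving_map[OF measure_preserving_map_funpow[OF T]]
      AE_measure_preserving_map[OF measure_preserving_map_funpow[OF V]]
    by (auto intro: AE_conjI)
  then show ?thesis unfolding Reg_def by (simp add: AE_all_countable)
qed

lemma measure_Int_Reg: "X \<in> sets M \<Longrightarrow> measure M (X \<inter> Reg) = measure M X"
  using AE_Reg by (intro measure_eq_AE) (auto intro: sets_Reg)

lemma measure_vimage_funpow_T_Int_Reg: "B \<in> sets M \<Longrightarrow> measure M ((T ^^ m) -` B \<inter> Reg) = measure M B"
  and measure_vimage_funpow_V_Int_Reg: "B \<in> sets M \<Longrightarrow> measure M ((V ^^ m) -` B \<inter> Reg) = measure M B"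
  using measure_Int_Reg[OF vimage_funpow_T_sets] measure_Int_Reg[OF vimage_funpow_V_sets]
    measure_vimage_funpow_T measure_vimage_funpow_V by simp_all

lemma Reg_regular: assumes "x \<in> Reg" shows "regular x"
proof -
  have "regular ((T ^^ 0) x)" using assms unfolding Reg_def by blast
  then show ?thesis by simp
qed

lemma Reg_T: assumes x: "x \<in> Reg" shows "T x \<in> Reg"
proof -
  have "regular ((T ^^ m) (T x))" for m
  proof -
    have "regular ((T ^^ Suc m) x)" using x unfolding Reg_def by blast
    then show ?thesis by (simp only: funpow_Suc_right o_apply)
  qed
  moreover have "regular ((V ^^ m) (T x))" for m
  proof (cases m)
    case 0
    have "regular ((T ^^ 1) x)" "regular ((V ^^ 1) x)" using x unfolding Reg_def by blast+
    then show ?thesis using 0 by simp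
  next
    case (Suc k)
    then have "(V ^^ m) (T x) = (V ^^ k) x"
      using Reg_regular[OF x] by (simp add: funpow_swap1 regular_def)
    then show ?thesis using x unfolding Reg_def by simp
  qed
  ultimately show ?thesis unfolding Reg_def by blast
qed

lemma Reg_V: assumes x: "x \<in> Reg" shows "V x \<in> Reg"
proof -
  have "regular ((V ^^ m) (V x))" for m
  proof -
    have "regular ((V ^^ Suc m) x)" using x unfolding Reg_def by blast
    then show ?thesis by (simp only: funpow_Suc_right o_apply)
  qed
  moreover have "regular ((T ^^ m) (V x))" for m
  proof (cases m)
    case 0
    have "regular ((T ^^ 1) x)" "regular ((V ^^ 1) x)" using x unfolding Reg_def by blast+
    then show ?thesis using 0 by simp
  next
    case (Suc k)
    then have "(T ^^ m) (V x) = (T ^^ k) x"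
      using Reg_regular[OF x] by (simp add: funpow_swap1 regular_def)
    then show ?thesis using x unfolding Reg_def by simp
  qed
  ultimately show ?thesis unfolding Reg_def by blast
qed

lemma Reg_funpow_T: "x \<in> Reg \<Longrightarrow> (T ^^ n) x \<in> Reg"
  by (induction n) (auto intro: Reg_T)

lemma Reg_funpow_V: "x \<in> Reg \<Longrightarrow> (V ^^ n) x \<in> Reg"
  by (induction n) (auto intro: Reg_V)

lemma Reg_V_T_funpow: "x \<in> Reg \<Longrightarrow> (V ^^ n) ((T ^^ n) x) = x"
proof (induction n)
  case (Suc n)
  then show ?case
    using Reg_regular[OF Reg_funpow_T[OF Suc.prems, of n]] by (simp add: funpow_swap1 regular_def)
qed simp

lemma Reg_T_V_funpow: "x \<in> Reg \<Longrightarrow> (T ^^ n) ((V ^^ n) x) = x"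
proof (induction n)
  case (Suc n)
  then show ?case
    using Reg_regular[OF Reg_funpow_V[OF Suc.prems, of n]] by (simp add: funpow_swap1 regular_def)
qed simp

lemma Reg_funpow_T_inj:
  assumes x: "x \<in> Reg" and eq: "(T ^^ i) x = (T ^^ j) x"
  shows "i = j"
proof -
  have less: False if "i' < j'" "(T ^^ i') x = (T ^^ j') x" for i' j'
  proof -
    have "(T ^^ (j' - i')) ((T ^^ i') x) = (T ^^ ((j' - i') + i')) x"
      by (simp only: funpow_add comp_apply)
    then have "(T ^^ (j' - i')) ((T ^^ i') x) = (T ^^ i') x"
      using that by simp
    moreover have "regular ((T ^^ i') x)" using Reg_regular[OF Reg_funpow_T[OF x]] .
    ultimately show False using that(1) unfolding regular_def by auto
  qed
  show ?thesis
  proof (rule linorder_cases[of i j])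
    assume "i < j"
    then show ?thesis using less eq by blast
  next
    assume "j < i"
    then show ?thesis using less eq[symmetric] by blast
  qed
qed

lemma Reg_int_iter_unique:
  assumes x: "x \<in> Reg" and y: "y \<in> Reg" and "int_iter T k x y" "int_iter T k' x y"
  shows "k = k'"
proof -
  have no_sign_change: False if "0 \<le> l" "l' < 0" "int_iter T l x y" "int_iter T l' x y" for l l'
  proof -
    have "y = (T ^^ nat l) x" "(T ^^ nat (- l')) y = x" using that by (auto simp: int_iter_def)
    then have "(T ^^ (nat (- l') + nat l)) x = x" by (simp add: funpow_add)
    then show False using Reg_regular[OF x] that(2) unfolding regular_def by auto
  qed
  consider "0 \<le> k" "0 \<le> k'" | "k < 0" "k' < 0" | "0 \<le> k" "k' < 0" | "k < 0" "0 \<le> k'" by linarith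
  then show ?thesis
  proof cases
    case 1
    then have "(T ^^ nat k) x = (T ^^ nat k') x" using assms(3,4) by (auto simp: int_iter_def)
    then show ?thesis using Reg_funpow_T_inj[OF x] 1 by fastforce
  next
    case 2
    then have "(T ^^ nat (- k)) y = (T ^^ nat (- k')) y" using assms(3,4) by (auto simp: int_iter_def)
    then show ?thesis using Reg_funpow_T_inj[OF y] 2 by fastforce
  qed (use no_sign_change assms(3,4) in blast)+
qed

text \<open>A non-null remainder would contain a non-null piece displaced by \<open>T\<^sup>n\<close>
  (\<open>exists_displaced_subset\<close>), which could be added to the maximal set \<open>A\<close>.\<close>
lemma maximal_displaced_subset:
  assumes n: "1 \<le> n" and C: "C \<in> sets M" "C \<subseteq> Reg"
  obtains A where "A \<in> sets M" "A \<subseteq> C" "A \<inter> (T ^^ n) -` A = {}"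
    "C - A - (T ^^ n) -` A - (V ^^ n) -` A \<in> null_sets M"
proof (rule exists_maximal_displaced_subset[OF C(1), where f = "T ^^ n"])
  fix A assume A: "A \<in> sets M" "A \<subseteq> C" "A \<inter> (T ^^ n) -` A = {}"
    and maximal: "\<And>D. D \<in> sets M \<Longrightarrow> D \<subseteq> C \<Longrightarrow> D \<inter> A = {} \<Longrightarrow>
      (A \<union> D) \<inter> (T ^^ n) -` (A \<union> D) = {} \<Longrightarrow> measure M D = 0"
  define L where "L = C - A - (T ^^ n) -` A - (V ^^ n) -` A"
  have L: "L \<in> sets M" "L \<subseteq> Reg"
    using C A(1) vimage_funpow_T_sets[OF A(1)] vimage_funpow_V_sets[OF A(1)] unfolding L_def by auto
  have "L \<in> null_sets M"
  proof (rule ccontr)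
    assume "L \<notin> null_sets M"
    moreover have "(T ^^ n) x \<noteq> x" if "x \<in> L" for x
      using Reg_regular[of x] that L(2) n unfolding regular_def by auto
    ultimately obtain D where D: "D \<in> sets M" "D \<subseteq> L" "D \<notin> null_sets M" "D \<inter> (T ^^ n) -` D = {}"
      by (rule exists_displaced_subset[OF sets_M measurable_funpow_T L(1)])
    have "(T ^^ n) x \<notin> D" if "x \<in> A" for x
    proof
      assume "(T ^^ n) x \<in> D"
      moreover have "(V ^^ n) ((T ^^ n) x) \<in> A" using that A(2) C(2) Reg_V_T_funpow by auto
      ultimately show False using D(2) unfolding L_def by blast
    qed
    moreover have "(T ^^ n) x \<notin> A" if "x \<in> D" for x
      using that D(2) unfolding L_def by blast
    ultimately have "(A \<union> D) \<inter> (T ^^ n) -` (A \<union> D) = {}" using A(3) D(4) by blast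
    moreover have "D \<subseteq> C" "D \<inter> A = {}" using D(2) unfolding L_def by blast+
    ultimately have "measure M D = 0" using maximal D(1) by blast
    then show False using D(1,3) by (auto simp: emeasure_eq_measure)
  qed
  with A show thesis unfolding L_def by (rule that)
qed

lemma exists_large_displaced_subset:
  assumes n: "1 \<le> n" and C: "C \<in> sets M" "C \<subseteq> Reg"
  obtains A where "A \<in> sets M" "A \<subseteq> C" "A \<inter> (T ^^ n) -` A = {}" "measure M C \<le> 3 * measure M A"
proof -
  obtain A where A: "A \<in> sets M" "A \<subseteq> C" "A \<inter> (T ^^ n) -` A = {}"
    and null: "C - A - (T ^^ n) -` A - (V ^^ n) -` A \<in> null_sets M"
    using maximal_displaced_subset[OF assms] by blast
  have sets: "(T ^^ n) -` A \<in> sets M" "(V ^^ n) -` A \<in> sets M"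
    using vimage_funpow_T_sets[OF A(1)] vimage_funpow_V_sets[OF A(1)] by auto
  have "measure M C = measure M (C - (C - A - (T ^^ n) -` A - (V ^^ n) -` A))"
    using measure_Diff_null_set[OF C(1) null] by simp
  also have "\<dots> \<le> measure M (A \<union> (T ^^ n) -` A \<union> (V ^^ n) -` A)"
    using A(1) sets by (intro finite_measure_mono) auto
  also have "\<dots> \<le> measure M A + measure M ((T ^^ n) -` A) + measure M ((V ^^ n) -` A)"
    using A(1) sets measure_Un_le[of "A \<union> (T ^^ n) -` A" M "(V ^^ n) -` A"]
      measure_Un_le[of A M "(T ^^ n) -` A"] by auto
  also have "\<dots> = 3 * measure M A"
    using measure_vimage_funpow_T[OF A(1)] measure_vimage_funpow_V[OF A(1)] by simp
  finally show thesis using A that by blast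
qed

text \<open>The image \<open>T\<^sup>n A\<close>, computed inside \<open>Reg\<close> as a preimage under the inverse.\<close>
definition forward :: "nat \<Rightarrow> 'a set \<Rightarrow> 'a set" where
  "forward n A = (V ^^ n) -` A \<inter> Reg"

lemma sets_forward: "A \<in> sets M \<Longrightarrow> forward n A \<in> sets M"
  unfolding forward_def using vimage_funpow_V_sets sets_Reg by blast

lemma measure_forward: "A \<in> sets M \<Longrightarrow> measure M (forward n A) = measure M A"
  unfolding forward_def by (rule measure_vimage_funpow_V_Int_Reg)

lemma measure_avoiding_funpow_T:
  assumes S: "S \<in> sets M"
  shows "1 - 2 * measure M S \<le> measure M ((Reg - S) \<inter> (T ^^ n) -` (Reg - S))"
proof -
  have C: "(Reg - S) \<inter> (T ^^ n) -` (Reg - S) \<in> sets M"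
    using sets_Reg S vimage_funpow_T_sets by auto
  have "AE x in M. (T ^^ n) x \<in> Reg"
    using AE_measure_preserving_map[OF measure_preserving_map_funpow[OF T] AE_Reg] .
  moreover have "space M - (S \<union> (T ^^ n) -` S) \<in> sets M"
    using S vimage_funpow_T_sets[OF S] by blast
  ultimately have "measure M ((Reg - S) \<inter> (T ^^ n) -` (Reg - S))
      = measure M (space M - (S \<union> (T ^^ n) -` S))"
    using AE_Reg C by (intro measure_eq_AE) (auto simp: space_M)
  also have "\<dots> \<ge> 1 - 2 * measure M S"
    using prob_compl[of "S \<union> (T ^^ n) -` S"] S vimage_funpow_T_sets[OF S]
      measure_Un_le[of S M "(T ^^ n) -` S"] measure_vimage_funpow_T[OF S] by auto
  finally show ?thesis .
qed

lemma exists_swappable_set: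
  assumes n: "1 \<le> n" and S: "S \<in> sets M" "measure M S \<le> 1/4" and a: "0 \<le> a" "a \<le> 1/6"
  obtains A where "A \<in> sets M" "A \<subseteq> Reg" "measure M A = a"
    "A \<inter> S = {}" "forward n A \<inter> S = {}" "A \<inter> forward n A = {}"
proof -
  define C where "C = (Reg - S) \<inter> (T ^^ n) -` (Reg - S)"
  have C: "C \<in> sets M" "C \<subseteq> Reg"
    unfolding C_def using sets_Reg S(1) vimage_funpow_T_sets by auto
  have "1/2 \<le> measure M C"
    using measure_avoiding_funpow_T[OF S(1), of n] S(2) unfolding C_def by linarith
  obtain A\<^sub>0 where A\<^sub>0: "A\<^sub>0 \<in> sets M" "A\<^sub>0 \<subseteq> C" "A\<^sub>0 \<inter> (T ^^ n) -` A\<^sub>0 = {}" "measure M C \<le> 3 * measure M A\<^sub>0"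
    using exists_large_displaced_subset[OF n C] by blast
  have "a \<le> measure M A\<^sub>0" using A\<^sub>0(4) \<open>1/2 \<le> measure M C\<close> a(2) by linarith
  then obtain A where A: "A \<in> sets M" "A \<subseteq> A\<^sub>0" "measure M A = a"
    using atomless_exists_subset_measure[OF atomless A\<^sub>0(1) a(1)] by blast
  have "x \<notin> S \<and> x \<notin> A" if "x \<in> forward n A" for x
  proof -
    have "x \<in> Reg" "(V ^^ n) x \<in> A" using that unfolding forward_def by auto
    then have y: "(V ^^ n) x \<in> A\<^sub>0" "(T ^^ n) ((V ^^ n) x) = x" using A(2) Reg_T_V_funpow by auto
    then have "x \<notin> S" using A\<^sub>0(2) unfolding C_def by force
    moreover have "x \<notin> A"
    proof
      assume "x \<in> A"
      then have "(V ^^ n) x \<in> A\<^sub>0 \<inter> (T ^^ n) -` A\<^sub>0" using y A(2) by auto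
      with A\<^sub>0(3) show False by blast
    qed
    ultimately show ?thesis ..
  qed
  moreover have "A \<subseteq> Reg" "A \<inter> S = {}" using A(2) A\<^sub>0(2) unfolding C_def by auto
  ultimately show thesis using A that by blast
qed

end

section \<open>An involution with prescribed jumps\<close>

lemma measurable_piecewise_countable:
  assumes "countable C" "\<And>\<Omega>. \<Omega> \<in> C \<Longrightarrow> \<Omega> \<in> sets M" "space M \<subseteq> \<Union>C"
    and "\<And>\<Omega>. \<Omega> \<in> C \<Longrightarrow> \<exists>h \<in> measurable M N. \<forall>x \<in> \<Omega>. f x = h x"
  shows "f \<in> measurable M N"
proof (rule measurable_piecewise_restrict[OF assms(1) _ assms(3)])
  fix \<Omega> assume \<Omega>: "\<Omega> \<in> C"
  then show "\<Omega> \<inter> space M \<in> sets M" using assms(2) by blast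
  obtain h where h: "h \<in> measurable M N" "\<forall>x \<in> \<Omega>. f x = h x" using assms(4)[OF \<Omega>] by blast
  have "f \<in> measurable (restrict_space M \<Omega>) N \<longleftrightarrow> h \<in> measurable (restrict_space M \<Omega>) N"
    using h(2) by (intro measurable_cong) (simp add: space_restrict_space)
  then show "f \<in> measurable (restrict_space M \<Omega>) N" using measurable_restrict_space1[OF h(1)] by blast
qed

text \<open>Sets \<open>piece k\<close> of measure \<open>a k\<close> are chosen one after the other, each disjoint from all
  earlier pieces and their partners \<open>T\<^bsup>n k\<^esup> (piece k)\<close>; the involution \<open>swap\<close> exchanges every
  piece with its partner and fixes the rest, so that its cocycle takes the value \<open>\<plusminus>n k\<close> on a set
  of measure \<open>2 a k\<close>.\<close>
locale swap_construction = aperiodic_automorphism +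
  fixes n :: "nat \<Rightarrow> nat" and a :: "nat \<Rightarrow> real"
  assumes n_pos: "1 \<le> n k" and a_nonneg: "0 \<le> a k" and a_partial_sums: "(\<Sum>j<k. a j) \<le> 1/8"
begin

definition swappable :: "nat \<Rightarrow> 'a set \<Rightarrow> 'a set \<Rightarrow> bool" where
  "swappable k S A \<longleftrightarrow> A \<in> sets M \<and> A \<subseteq> Reg \<and> measure M A = a k \<and>
     A \<inter> S = {} \<and> forward (n k) A \<inter> S = {} \<and> A \<inter> forward (n k) A = {}"

primrec used :: "nat \<Rightarrow> 'a set" where
  "used 0 = {}"
| "used (Suc k) = used k \<union> (SOME A. swappable k (used k) A) \<union>
     forward (n k) (SOME A. swappable k (used k) A)"

definition piece :: "nat \<Rightarrow> 'a set" where
  "piece k = (SOME A. swappable k (used k) A)"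

definition partner :: "nat \<Rightarrow> 'a set" where
  "partner k = forward (n k) (piece k)"

lemma used_Suc: "used (Suc k) = used k \<union> piece k \<union> partner k"
  by (simp add: piece_def partner_def)

lemma a_le: "a k \<le> 1/8"
  using a_partial_sums[of "Suc k"] sum_nonneg[of "{..<k}" a] a_nonneg by simp

lemma swappable_piece: "swappable k (used k) (piece k)"
proof -
  have step: "swappable k (used k) (piece k)"
    if used: "used k \<in> sets M" "measure M (used k) \<le> 2 * (\<Sum>j<k. a j)" for k
  proof -
    have "measure M (used k) \<le> 1/4" using used(2) a_partial_sums[of k] by simp
    moreover have "a k \<le> 1/6" using a_le[of k] by simp
    ultimately obtain A where "A \<in> sets M" "A \<subseteq> Reg" "measure M A = a k" "A \<inter> used k = {}"
      "forward (n k) A \<inter> used k = {}" "A \<inter> forward (n k) A = {}"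
      by (rule exists_swappable_set[OF n_pos used(1) _ a_nonneg])
    then have "swappable k (used k) A" unfolding swappable_def by blast
    then show ?thesis unfolding piece_def by (rule someI)
  qed
  have "used k \<in> sets M \<and> measure M (used k) \<le> 2 * (\<Sum>j<k. a j)" for k
  proof (induction k)
    case (Suc k)
    then have "swappable k (used k) (piece k)" using step by blast
    then have "piece k \<in> sets M" "measure M (piece k) = a k"
      "partner k \<in> sets M" "measure M (partner k) = a k"
      unfolding partner_def swappable_def using measure_forward sets_forward by auto
    moreover have "used k \<in> sets M" "measure M (used k) \<le> 2 * (\<Sum>j<k. a j)" using Suc by auto
    moreover have "measure M (used (Suc k)) \<le> measure M (used k \<union> piece k) + measure M (partner k)"
      unfolding used_Suc by (rule measure_Un_le) (use calculation in blast)+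
    moreover have "measure M (used k \<union> piece k) \<le> measure M (used k) + measure M (piece k)"
      by (rule measure_Un_le) (use calculation in blast)+
    ultimately show ?case unfolding used_Suc by auto
  qed simp
  then show ?thesis using step by blast
qed

lemma sets_piece: "piece k \<in> sets M"
  and piece_Reg: "piece k \<subseteq> Reg"
  and measure_piece: "measure M (piece k) = a k"
  and piece_used: "piece k \<inter> used k = {}"
  and partner_used: "partner k \<inter> used k = {}"
  and piece_partner_same: "piece k \<inter> partner k = {}"
  using swappable_piece[of k] unfolding swappable_def partner_def by auto

lemma sets_partner: "partner k \<in> sets M"
  unfolding partner_def using sets_forward[OF sets_piece] .

lemma measure_partner: "measure M (partner k) = a k"
  unfolding partner_def using measure_forward[OF sets_piece] measure_piece by simp

lemma mem_partner_iff: "x \<in> partner k \<longleftrightarrow> x \<in> Reg \<and> (V ^^ n k) x \<in> piece k"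
  unfolding partner_def forward_def by blast

lemma subset_used: "j < k \<Longrightarrow> piece j \<union> partner j \<subseteq> used k"
proof (induction k)
  case (Suc k)
  then show ?case unfolding used_Suc by (cases "j = k") auto
qed simp

lemma piece_partner_disjoint: assumes "x \<in> piece j" "x \<in> partner k" shows False
proof -
  consider "j < k" | "k < j" | "j = k" by linarith
  then show False
  proof cases
    case 1
    then show False using subset_used[OF 1] partner_used[of k] assms by blast
  next
    case 2
    then show False using subset_used[OF 2] piece_used[of j] assms by blast
  qed (use piece_partner_same assms in blast)
qed

lemma pieces_disjoint: assumes "x \<in> piece j" "x \<in> piece k" shows "j = k"
proof (rule ccontr)
  assume "j \<noteq> k"
  then consider "j < k" | "k < j" by linarith
  then show False
  proof cases
    case 1
    then show False using subset_used[OF 1] piece_used[of k] assms by blast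
  next
    case 2
    then show False using subset_used[OF 2] piece_used[of j] assms by blast
  qed
qed

lemma partners_disjoint: assumes "x \<in> partner j" "x \<in> partner k" shows "j = k"
proof (rule ccontr)
  assume "j \<noteq> k"
  then consider "j < k" | "k < j" by linarith
  then show False
  proof cases
    case 1
    then show False using subset_used[OF 1] partner_used[of k] assms by blast
  next
    case 2
    then show False using subset_used[OF 2] partner_used[of j] assms by blast
  qed
qed

definition unmoved :: "'a set" where
  "unmoved = - (\<Union>k. piece k) - (\<Union>k. partner k)"

lemma sets_unmoved: "unmoved \<in> sets M"
  unfolding unmoved_def using sets_piece sets_partner sets.compl_sets[of _ M]
  by (simp add: space_M Compl_eq_Diff_UNIV sets.Diff sets.countable_UN)

lemma pieces_cases:
  obtains (piece) k where "x \<in> piece k"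
  | (partner) k where "x \<in> partner k"
  | (unmoved) "x \<in> unmoved"
  unfolding unmoved_def by blast

definition swap :: "'a \<Rightarrow> 'a" where
  "swap x = (if \<exists>k. x \<in> piece k then (T ^^ n (THE k. x \<in> piece k)) x
     else if \<exists>k. x \<in> partner k then (V ^^ n (THE k. x \<in> partner k)) x else x)"

definition cocycle :: "'a \<Rightarrow> int" where
  "cocycle x = (if \<exists>k. x \<in> piece k then int (n (THE k. x \<in> piece k))
     else if \<exists>k. x \<in> partner k then - int (n (THE k. x \<in> partner k)) else 0)"

lemma swap_piece: "x \<in> piece k \<Longrightarrow> swap x = (T ^^ n k) x"
  and cocycle_piece: "x \<in> piece k \<Longrightarrow> cocycle x = int (n k)"
proof -
  assume x: "x \<in> piece k"
  then have "(THE k. x \<in> piece k) = k" using pieces_disjoint by blast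
  then show "swap x = (T ^^ n k) x" "cocycle x = int (n k)"
    using x unfolding swap_def cocycle_def by auto
qed

lemma swap_partner: "x \<in> partner k \<Longrightarrow> swap x = (V ^^ n k) x"
  and cocycle_partner: "x \<in> partner k \<Longrightarrow> cocycle x = - int (n k)"
proof -
  assume x: "x \<in> partner k"
  then have "(THE k. x \<in> partner k) = k" using partners_disjoint by blast
  moreover have "\<nexists>j. x \<in> piece j" using x piece_partner_disjoint by blast
  ultimately show "swap x = (V ^^ n k) x" "cocycle x = - int (n k)"
    using x unfolding swap_def cocycle_def by auto
qed

lemma swap_unmoved: "x \<in> unmoved \<Longrightarrow> swap x = x"
  and cocycle_unmoved: "x \<in> unmoved \<Longrightarrow> cocycle x = 0"
  unfolding swap_def cocycle_def unmoved_def by auto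

lemma measurable_swap: "swap \<in> measurable M M"
  and measurable_cocycle: "cocycle \<in> measurable M (count_space UNIV)"
proof -
  define C where "C = range piece \<union> range partner \<union> {unmoved}"
  have C: "countable C" "\<And>\<Omega>. \<Omega> \<in> C \<Longrightarrow> \<Omega> \<in> sets M" "space M \<subseteq> \<Union>C"
    unfolding C_def using sets_piece sets_partner sets_unmoved by (auto simp: unmoved_def)
  show "swap \<in> measurable M M"
  proof (rule measurable_piecewise_countable[OF C])
    fix \<Omega> assume "\<Omega> \<in> C"
    then consider k where "\<Omega> = piece k" | k where "\<Omega> = partner k" | "\<Omega> = unmoved"
      unfolding C_def by blast
    then show "\<exists>h\<in>measurable M M. \<forall>x\<in>\<Omega>. swap x = h x"
    proof cases
      case (1 k)
      then show ?thesis using swap_piece measurable_funpow_T by blast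
    next
      case (2 k)
      then show ?thesis using swap_partner measurable_funpow_V by blast
    next
      case 3
      then show ?thesis using swap_unmoved by (intro bexI[of _ "\<lambda>x. x"]) auto
    qed
  qed
  show "cocycle \<in> measurable M (count_space UNIV)"
  proof (rule measurable_piecewise_countable[OF C])
    fix \<Omega> assume "\<Omega> \<in> C"
    then consider k where "\<Omega> = piece k" | k where "\<Omega> = partner k" | "\<Omega> = unmoved"
      unfolding C_def by blast
    then show "\<exists>h\<in>measurable M (count_space UNIV). \<forall>x\<in>\<Omega>. cocycle x = h x"
    proof cases
      case (1 k)
      then show ?thesis using cocycle_piece by (intro bexI[of _ "\<lambda>_. int (n k)"]) auto
    next
      case (2 k)
      then show ?thesis using cocycle_partner by (intro bexI[of _ "\<lambda>_. - int (n k)"]) auto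
    next
      case 3
      then show ?thesis using cocycle_unmoved by (intro bexI[of _ "\<lambda>_. 0"]) auto
    qed
  qed
qed

lemma emeasure_decompose:
  assumes X: "X \<in> sets M"
  shows "emeasure M X = (\<Sum>k. emeasure M (X \<inter> piece k)) + (\<Sum>k. emeasure M (X \<inter> partner k))
    + emeasure M (X \<inter> unmoved)"
proof -
  have sets: "X \<inter> piece k \<in> sets M" "X \<inter> partner k \<in> sets M" for k
    using X sets_piece sets_partner by auto
  have disj: "disjoint_family (\<lambda>k. X \<inter> piece k)" "disjoint_family (\<lambda>k. X \<inter> partner k)"
    unfolding disjoint_family_on_def using pieces_disjoint partners_disjoint by blast+
  have unions: "(\<Union>k. X \<inter> piece k) \<in> sets M" "(\<Union>k. X \<inter> partner k) \<in> sets M"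
    using sets by (auto intro!: sets.countable_UN' simp del: UN_simps)
  have "X = (\<Union>k. X \<inter> piece k) \<union> (\<Union>k. X \<inter> partner k) \<union> (X \<inter> unmoved)"
    unfolding unmoved_def by blast
  also have "emeasure M \<dots> = emeasure M ((\<Union>k. X \<inter> piece k) \<union> (\<Union>k. X \<inter> partner k))
      + emeasure M (X \<inter> unmoved)"
    using unions X sets_unmoved by (intro plus_emeasure[symmetric]) (auto simp: unmoved_def)
  also have "emeasure M ((\<Union>k. X \<inter> piece k) \<union> (\<Union>k. X \<inter> partner k))
      = emeasure M (\<Union>k. X \<inter> piece k) + emeasure M (\<Union>k. X \<inter> partner k)"
    using unions piece_partner_disjoint by (intro plus_emeasure[symmetric]) auto
  moreover have "(\<Sum>k. emeasure M (X \<inter> piece k)) = emeasure M (\<Union>k. X \<inter> piece k)"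
    "(\<Sum>k. emeasure M (X \<inter> partner k)) = emeasure M (\<Union>k. X \<inter> partner k)"
    using sets by (intro suminf_emeasure disj; auto)+
  ultimately show ?thesis by simp
qed

lemma swap_vimage_piece: "swap -` B \<inter> piece k = (T ^^ n k) -` (B \<inter> partner k) \<inter> Reg"
proof (intro set_eqI iffI)
  fix x assume x: "x \<in> swap -` B \<inter> piece k"
  then have "x \<in> Reg" using piece_Reg by blast
  then have "(T ^^ n k) x \<in> partner k"
    using x Reg_funpow_T Reg_V_T_funpow unfolding mem_partner_iff by auto
  then show "x \<in> (T ^^ n k) -` (B \<inter> partner k) \<inter> Reg"
    using x swap_piece[of x k] \<open>x \<in> Reg\<close> by auto
next
  fix x assume x: "x \<in> (T ^^ n k) -` (B \<inter> partner k) \<inter> Reg"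
  then have "(T ^^ n k) x \<in> partner k" by blast
  then have "(V ^^ n k) ((T ^^ n k) x) \<in> piece k" unfolding mem_partner_iff by blast
  then have "x \<in> piece k" using Reg_V_T_funpow[of x "n k"] x by simp
  then show "x \<in> swap -` B \<inter> piece k" using x swap_piece[of x k] by auto
qed

lemma swap_vimage_partner: "swap -` B \<inter> partner k = (V ^^ n k) -` (B \<inter> piece k) \<inter> Reg"
proof (intro set_eqI iffI)
  fix x assume x: "x \<in> swap -` B \<inter> partner k"
  then have "swap x = (V ^^ n k) x" "x \<in> Reg" "(V ^^ n k) x \<in> piece k"
    using swap_partner mem_partner_iff by blast+
  with x show "x \<in> (V ^^ n k) -` (B \<inter> piece k) \<inter> Reg" by auto
next
  fix x assume "x \<in> (V ^^ n k) -` (B \<inter> piece k) \<inter> Reg"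
  then have "x \<in> partner k" "(V ^^ n k) x \<in> B" unfolding mem_partner_iff by auto
  then show "x \<in> swap -` B \<inter> partner k" using swap_partner[of x k] by auto
qed

lemma swap_vimage_unmoved: "swap -` B \<inter> unmoved = B \<inter> unmoved"
  using swap_unmoved by auto

lemma distr_swap: "distr M M swap = M"
proof (rule measure_eqI)
  fix B assume "B \<in> sets (distr M M swap)"
  then have B: "B \<in> sets M" by simp
  have "emeasure M (swap -` B \<inter> piece k) = emeasure M (B \<inter> partner k)" for k
  proof -
    have "B \<inter> partner k \<in> sets M" using B sets_partner by blast
    then show ?thesis unfolding swap_vimage_piece emeasure_eq_measure
      by (simp only: measure_vimage_funpow_T_Int_Reg)
  qed
  moreover have "emeasure M (swap -` B \<inter> partner k) = emeasure M (B \<inter> piece k)" for k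
  proof -
    have "B \<inter> piece k \<in> sets M" using B sets_piece by blast
    then show ?thesis unfolding swap_vimage_partner emeasure_eq_measure
      by (simp only: measure_vimage_funpow_V_Int_Reg)
  qed
  moreover have "swap -` B \<in> sets M"
    using measurable_sets[OF measurable_swap B] by (simp add: space_M)
  ultimately have "emeasure M (swap -` B) = (\<Sum>k. emeasure M (B \<inter> partner k))
      + (\<Sum>k. emeasure M (B \<inter> piece k)) + emeasure M (B \<inter> unmoved)"
    using emeasure_decompose[of "swap -` B"] by (simp only: swap_vimage_unmoved)
  also have "\<dots> = emeasure M B" using emeasure_decompose[OF B] by (simp add: add_ac)
  finally show "emeasure (distr M M swap) B = emeasure M B"
    using emeasure_distr[OF measurable_swap B] by (simp add: space_M)
qed simp

lemma Reg_swap: "x \<in> Reg \<Longrightarrow> swap x \<in> Reg"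
  and Reg_swap_swap: "x \<in> Reg \<Longrightarrow> swap (swap x) = x"
  and Reg_int_iter_cocycle: "x \<in> Reg \<Longrightarrow> int_iter T (cocycle x) x (swap x)"
proof -
  assume x: "x \<in> Reg"
  have "swap x \<in> Reg \<and> swap (swap x) = x \<and> int_iter T (cocycle x) x (swap x)"
  proof (cases x rule: pieces_cases)
    case (piece k)
    then have "(T ^^ n k) x \<in> partner k"
      using x Reg_funpow_T Reg_V_T_funpow unfolding mem_partner_iff by auto
    then show ?thesis
      using piece x swap_piece cocycle_piece swap_partner Reg_funpow_T Reg_V_T_funpow
      by (simp add: int_iter_def)
  next
    case (partner k)
    then have "(V ^^ n k) x \<in> piece k" "- int (n k) < 0"
      using n_pos[of k] unfolding mem_partner_iff by auto
    then show ?thesis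
      using partner x swap_partner cocycle_partner swap_piece Reg_funpow_V Reg_T_V_funpow
      by (simp add: int_iter_def)
  next
    case unmoved
    then show ?thesis using x swap_unmoved cocycle_unmoved by (simp add: int_iter_def)
  qed
  then show "swap x \<in> Reg" "swap (swap x) = x" "int_iter T (cocycle x) x (swap x)" by auto
qed

lemma aut_swap: "aut M swap"
proof -
  have "measure_preserving_map M swap"
    unfolding measure_preserving_map_def using measurable_swap distr_swap by simp
  moreover have "AE x in M. swap (swap x) = x"
    using AE_Reg by eventually_elim (rule Reg_swap_swap)
  ultimately show ?thesis unfolding aut_def by blast
qed

lemma nn_integral_cocycle:
  assumes f0: "f 0 = 0" and nonneg: "\<And>k. 0 \<le> f (real (n k))"
  shows "(\<integral>\<^sup>+ x. ennreal (f (real_of_int \<bar>cocycle x\<bar>)) \<partial>M) = (\<Sum>k. ennreal (f (real (n k)) * (2 * a k)))"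
proof -
  define D where "D k = piece k \<union> partner k" for k
  have sets_D: "D k \<in> sets M" for k unfolding D_def using sets_piece sets_partner by blast
  have D_disjoint: "x \<notin> D j" if "x \<in> D k" "j \<noteq> k" for x j k
    using that unfolding D_def by (auto dest: pieces_disjoint partners_disjoint piece_partner_disjoint)
  have "ennreal (f (real_of_int \<bar>cocycle x\<bar>)) = (\<Sum>k. ennreal (f (real (n k))) * indicator (D k) x)" for x
  proof (cases "\<exists>k. x \<in> D k")
    case True
    then obtain k where k: "x \<in> D k" by blast
    then have "\<bar>cocycle x\<bar> = int (n k)" unfolding D_def using cocycle_piece cocycle_partner by auto
    moreover have "(\<Sum>j. ennreal (f (real (n j))) * indicator (D j) x)
        = (\<Sum>j\<in>{k}. ennreal (f (real (n j))) * indicator (D j) x)"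
      by (rule suminf_finite) (use D_disjoint[OF k] in simp_all)
    ultimately show ?thesis using k by simp
  next
    case False
    then have "x \<in> unmoved" unfolding D_def unmoved_def by blast
    then show ?thesis using False cocycle_unmoved f0 by simp
  qed
  then have "(\<integral>\<^sup>+ x. ennreal (f (real_of_int \<bar>cocycle x\<bar>)) \<partial>M)
      = (\<Sum>k. \<integral>\<^sup>+ x. ennreal (f (real (n k))) * indicator (D k) x \<partial>M)"
    using sets_D by (simp add: nn_integral_suminf)
  also have "\<dots> = (\<Sum>k. ennreal (f (real (n k))) * emeasure M (D k))"
    using sets_D by (subst nn_integral_cmult_indicator) auto
  also have "emeasure M (D k) = ennreal (2 * a k)" for k
    using finite_measure_Union[OF sets_piece sets_partner piece_partner_same]
      measure_piece measure_partner unfolding D_def by (simp add: emeasure_eq_measure)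
  then have "(\<Sum>k. ennreal (f (real (n k))) * emeasure M (D k)) = (\<Sum>k. ennreal (f (real (n k)) * (2 * a k)))"
    using nonneg a_nonneg by (simp add: ennreal_mult)
  finally show ?thesis .
qed

lemma swap_in_full_group_phi_iff:
  assumes f0: "f 0 = 0" and nonneg: "\<And>k. 0 \<le> f (real (n k))"
  shows "swap \<in> full_group_phi M T f \<longleftrightarrow> summable (\<lambda>k. f (real (n k)) * a k)"
proof -
  have terms: "0 \<le> f (real (n k)) * (2 * a k)" for k using nonneg a_nonneg by simp
  have "(\<integral>\<^sup>+ x. ennreal (f (real_of_int \<bar>cocycle x\<bar>)) \<partial>M) < \<infinity>
      \<longleftrightarrow> (\<Sum>k. ennreal (f (real (n k)) * (2 * a k))) \<noteq> \<top>"
    unfolding nn_integral_cocycle[OF assms] by (simp add: less_top)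
  also have "\<dots> \<longleftrightarrow> summable (\<lambda>k. f (real (n k)) * (2 * a k))"
  proof
    show "summable (\<lambda>k. f (real (n k)) * (2 * a k))"
      if "(\<Sum>k. ennreal (f (real (n k)) * (2 * a k))) \<noteq> \<top>"
      using summable_suminf_not_top[OF terms that] .
  qed (rule ennreal_suminf_neq_top[OF _ terms])
  also have "\<dots> \<longleftrightarrow> summable (\<lambda>k. f (real (n k)) * a k)"
    using summable_cmult_iff[of 2 "\<lambda>k. f (real (n k)) * a k"] by (simp add: ac_simps)
  finally have finite_iff: "(\<integral>\<^sup>+ x. ennreal (f (real_of_int \<bar>cocycle x\<bar>)) \<partial>M) < \<infinity>
      \<longleftrightarrow> summable (\<lambda>k. f (real (n k)) * a k)" .
  have AE_cocycle: "AE x in M. int_iter T (cocycle x) x (swap x)"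
    using AE_Reg by eventually_elim (rule Reg_int_iter_cocycle)
  show ?thesis
  proof
    assume "swap \<in> full_group_phi M T f"
    then obtain c :: "'a \<Rightarrow> int" where c: "AE x in M. int_iter T (c x) x (swap x)"
      "(\<integral>\<^sup>+ x. ennreal (f (real_of_int \<bar>c x\<bar>)) \<partial>M) < \<infinity>"
      unfolding full_group_phi_def by blast
    have "AE x in M. c x = cocycle x"
      using c(1) AE_Reg
    proof eventually_elim
      case (elim x)
      show ?case
        using Reg_int_iter_unique[OF elim(2) Reg_swap[OF elim(2)] elim(1) Reg_int_iter_cocycle[OF elim(2)]] .
    qed
    then have "(\<integral>\<^sup>+ x. ennreal (f (real_of_int \<bar>c x\<bar>)) \<partial>M)
        = (\<integral>\<^sup>+ x. ennreal (f (real_of_int \<bar>cocycle x\<bar>)) \<partial>M)"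
      by (intro nn_integral_cong_AE) auto
    with c(2) finite_iff show "summable (\<lambda>k. f (real (n k)) * a k)" by simp
  next
    assume "summable (\<lambda>k. f (real (n k)) * a k)"
    then show "swap \<in> full_group_phi M T f"
      unfolding full_group_phi_def using aut_swap measurable_cocycle AE_cocycle finite_iff by blast
  qed
qed

end

lemma (in aperiodic_automorphism) exists_full_group_element:
  assumes "\<And>k. 1 \<le> n k" "\<And>k. 0 \<le> a k" "\<And>k. (\<Sum>j<k. a j) \<le> 1/8"
  obtains U where "\<And>f. f 0 = 0 \<Longrightarrow> (\<And>k. 0 \<le> f (real (n k))) \<Longrightarrow>
    U \<in> full_group_phi M T f \<longleftrightarrow> summable (\<lambda>k. f (real (n k)) * a k)"
proof -
  interpret swap_construction M T V n a
    using assms by unfold_locales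
  show thesis using that swap_in_full_group_phi_iff by blast
qed

section \<open>Comparison of the full groups\<close>

lemma exists_jumps_separating:
  assumes \<phi>: "metric_compatible \<phi>" and \<psi>: "metric_compatible \<psi>" and "\<phi> \<notin> O[at_top](\<psi>)"
  obtains n :: "nat \<Rightarrow> nat" and a :: "nat \<Rightarrow> real"
  where "\<And>k. 1 \<le> n k" "\<And>k. 0 \<le> a k" "\<And>k. (\<Sum>j<k. a j) \<le> 1/8"
    "summable (\<lambda>k. \<psi> (real (n k)) * a k)" "\<not> summable (\<lambda>k. \<phi> (real (n k)) * a k)"
proof (rule metric_compatible_not_bigo_seq[OF assms, where C = "\<lambda>k. 2 ^ k"])
  fix n :: "nat \<Rightarrow> nat"
  assume n: "\<And>k. 1 \<le> n k" "\<And>k. 2^k * \<psi> (real (n k)) \<le> \<phi> (real (n k))"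
  define \<beta> where "\<beta> = \<psi> 1 / 16"
  have \<beta>: "0 < \<beta>" unfolding \<beta>_def using metric_compatible_pos[OF \<psi>] by simp
  have \<psi>n: "\<psi> 1 \<le> \<psi> (real (n k))" "0 < \<psi> (real (n k))" for k
    using n(1)[of k] metric_compatible_mono[OF \<psi>, of 1 "real (n k)"] metric_compatible_pos[OF \<psi>, of 1]
    by auto
  \<comment> \<open>makes \<open>\<psi>(n k) a k\<close> geometric while \<open>\<phi>(n k) a k \<ge> \<beta>\<close>\<close>
  define a where "a k = \<beta> / (2^k * \<psi> (real (n k)))" for k
  have a_nonneg: "0 \<le> a k" for k unfolding a_def using \<beta> \<psi>n(2)[of k] by simp
  have \<psi>_terms: "\<psi> (real (n k)) * a k = \<beta> * (1/2)^k" for k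
    unfolding a_def using \<psi>n(2)[of k] by (simp add: field_simps)
  have "a k \<le> (1/16) * (1/2)^k" for k
  proof -
    have "a k = \<psi> 1 / \<psi> (real (n k)) * ((1/16) * (1/2)^k)"
      unfolding a_def \<beta>_def using \<psi>n(2)[of k] by (simp add: field_simps)
    also have "\<dots> \<le> (1/16) * (1/2)^k" using \<psi>n[of k] by (simp add: mult_le_cancel_right1 divide_le_eq)
    finally show ?thesis .
  qed
  then have "(\<Sum>j<k. a j) \<le> (1/16) * (\<Sum>j<k. (1/2)^j)" for k
    by (simp add: sum_distrib_left sum_mono)
  also have "(\<Sum>j<k. (1/2::real)^j) \<le> 2" for k
    using sum_le_suminf[of "\<lambda>j. (1/2::real)^j" "{..<k}"] suminf_geometric[of "1/2::real"] by simp
  finally have partial: "(\<Sum>j<k. a j) \<le> 1/8" for k by simp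
  have "\<beta> \<le> \<phi> (real (n k)) * a k" for k
  proof -
    have "\<beta> = 2^k * \<psi> (real (n k)) * a k" unfolding a_def using \<psi>n(2)[of k] by simp
    also have "\<dots> \<le> \<phi> (real (n k)) * a k" using n(2) a_nonneg by (rule mult_right_mono)
    finally show ?thesis .
  qed
  then have "\<not> (\<lambda>k. \<phi> (real (n k)) * a k) \<longlonglongrightarrow> 0"
    using LIMSEQ_le_const[of "\<lambda>k. \<phi> (real (n k)) * a k" 0 \<beta>] \<beta> by auto
  then have "\<not> summable (\<lambda>k. \<phi> (real (n k)) * a k)" using summable_LIMSEQ_zero by blast
  moreover have "summable (\<lambda>k. \<psi> (real (n k)) * a k)"
    unfolding \<psi>_terms by (intro summable_mult summable_geometric) simp
  ultimately show thesis using n(1) a_nonneg partial by (intro that[of n a])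
qed

lemma full_group_phi_not_subset:
  assumes M: "standard_atomless_prob M" and T: "aut M T" "aperiodic M T"
    and \<phi>: "metric_compatible \<phi>" and \<psi>: "metric_compatible \<psi>" and "\<phi> \<notin> O[at_top](\<psi>)"
  shows "\<not> full_group_phi M T \<psi> \<subseteq> full_group_phi M T \<phi>"
proof -
  obtain V where V: "measure_preserving_map M V" "AE x in M. V (T x) = x" "AE x in M. T (V x) = x"
    using T(1) unfolding aut_def by blast
  have "prob_space M" "sets M = sets borel" "atomless M"
    using M unfolding standard_atomless_prob_def by auto
  moreover have "measure_preserving_map M T" using T(1) unfolding aut_def by blast
  ultimately interpret aperiodic_automorphism M T V
    using V T(2) by (intro aperiodic_automorphism.intro aperiodic_automorphism_axioms.intro)
  show ?thesis
  proof (rule exists_jumps_separating[OF \<phi> \<psi> assms(6)])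
    fix n :: "nat \<Rightarrow> nat" and a :: "nat \<Rightarrow> real"
    assume jumps: "\<And>k. 1 \<le> n k" "\<And>k. 0 \<le> a k" "\<And>k. (\<Sum>j<k. a j) \<le> 1/8"
      and \<psi>_summable: "summable (\<lambda>k. \<psi> (real (n k)) * a k)"
      and \<phi>_not_summable: "\<not> summable (\<lambda>k. \<phi> (real (n k)) * a k)"
    show ?thesis
    proof (rule exists_full_group_element[OF jumps])
      fix U assume U: "\<And>f. f 0 = 0 \<Longrightarrow> (\<And>k. 0 \<le> f (real (n k))) \<Longrightarrow>
        U \<in> full_group_phi M T f \<longleftrightarrow> summable (\<lambda>k. f (real (n k)) * a k)"
      have "U \<in> full_group_phi M T f \<longleftrightarrow> summable (\<lambda>k. f (real (n k)) * a k)"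
        if "metric_compatible f" for f
        using U[of f, OF metric_compatible_zero[OF that] metric_compatible_nonneg[OF that]] by simp
      then have "U \<in> full_group_phi M T \<psi>" "U \<notin> full_group_phi M T \<phi>"
        using \<phi> \<psi> \<psi>_summable \<phi>_not_summable by simp_all
      then show ?thesis by blast
    qed
  qed
qed

theorem mainTheorem11:
  fixes M :: "'a::polish_space measure"
    and T :: "'a \<Rightarrow> 'a"
    and \<phi> \<psi> :: "real \<Rightarrow> real"
  assumes "standard_atomless_prob M"
    and "metric_compatible \<phi>" and "metric_compatible \<psi>"
    and "aut M T" and "aperiodic M T"
  shows "(\<phi> \<in> O[at_top](\<psi>) \<longleftrightarrow> full_group_phi M T \<psi> \<subseteq> full_group_phi M T \<phi>) \<and>
         (full_group_phi M T \<phi> = full_group_phi M T \<psi> \<longleftrightarrow>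
            \<phi> \<in> O[at_top](\<psi>) \<and> \<psi> \<in> O[at_top](\<phi>))"
proof -
  have "\<phi> \<in> O[at_top](\<psi>) \<longleftrightarrow> full_group_phi M T \<psi> \<subseteq> full_group_phi M T \<phi>"
    using full_group_phi_mono[OF assms(2,3)] full_group_phi_not_subset[OF assms(1,4,5,2,3)] by blast
  moreover have "\<psi> \<in> O[at_top](\<phi>) \<longleftrightarrow> full_group_phi M T \<phi> \<subseteq> full_group_phi M T \<psi>"
    using full_group_phi_mono[OF assms(3,2)] full_group_phi_not_subset[OF assms(1,4,5,3,2)] by blast
  ultimately show ?thesis by blast
qed

end
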